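(* Let $G=(V,E)$ be a simple, connected graph with maximum degree $\Delta$, and let $V = A \cup B \cup C$ be a partition into pairwise disjoint sets ($C$ possibly empty) satisfying: (1) every $v \in A$ satisfies $d_B(v) \geq d_A(v) + \max\{1, d_C(v)\}$; (2) every $v \in B$ satisfies $d_A(v) \geq d_B(v) + \max\{1, d_C(v)\}$; (3) $d_C(v) = 0$ for all $v \in C$; (4) every $v \in C$ satisfies $d_A(v) = d_B(v)$; (5) $\# E(A \cup B, C) + 2\# E(A,A) + 2\# E(B,B) \leq 2\# E(A,B)$. Then $$\# E(A \cup C, B) \geq \left(\frac{1}{2} + \frac{1}{3\Delta}\right)\textsc{MaxCut}(G).$$
   Context: For a vertex $v$ and a set $S \subseteq V$, $d_S(v)$ denotes the number of neighbors of $v$ in $S$. For disjoint $X,Y \subseteq V$, $\# E(X,Y)$ is the number of edges with one endpoint in $X$ and the other in $Y$; $\# E(X,X)$ is the number of edges with both endpoints in $X$. $\textsc{MaxCut}(G) = \max \# E(X,Y)$ over all partitions $V = X \cup Y$ into disjoint sets. *)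

theory Defs
  imports Complex_Main
begin

definition simple_graph :: "'a set \<Rightarrow> 'a set set \<Rightarrow> bool" where
  "simple_graph V E \<longleftrightarrow> finite V \<and> (\<forall>e\<in>E. e \<subseteq> V \<and> card e = 2)"

definition adj_rel :: "'a set set \<Rightarrow> ('a \<times> 'a) set" where
  "adj_rel E = {(u, v). {u, v} \<in> E}"

definition connected_graph :: "'a set \<Rightarrow> 'a set set \<Rightarrow> bool" where
  "connected_graph V E \<longleftrightarrow> V \<noteq> {} \<and> (\<forall>u\<in>V. \<forall>v\<in>V. (u, v) \<in> (adj_rel E)\<^sup>*)"

definition deg_in :: "'a set set \<Rightarrow> 'a set \<Rightarrow> 'a \<Rightarrow> nat" where
  "deg_in E S v = card {u \<in> S. {u, v} \<in> E}"

definition max_degree :: "'a set \<Rightarrow> 'a set set \<Rightarrow> nat" where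
  "max_degree V E = Max ((\<lambda>v. deg_in E V v) ` V)"

definition num_edges :: "'a set set \<Rightarrow> 'a set \<Rightarrow> 'a set \<Rightarrow> nat" where
  "num_edges E X Y = card {e \<in> E. \<exists>x\<in>X. \<exists>y\<in>Y. e = {x, y}}"

definition max_cut :: "'a set \<Rightarrow> 'a set set \<Rightarrow> nat" where
  "max_cut V E = Max ((\<lambda>X. num_edges E X (V - X)) ` Pow V)"

end

theory Submission
  imports Defs
begin

text \<open>Write \<open>p = #E(A,B)\<close>, \<open>s = #E(A,C) = #E(B,C)\<close> (vertices of \<open>C\<close> have as many
  neighbours in \<open>A\<close> as in \<open>B\<close>), and \<open>a, b\<close> for twice the number of edges inside \<open>A\<close> and
  inside \<open>B\<close>. Double counting gives \<open>2|E| = a + b + 2p + 4s\<close>, and the cut \<open>(A \<union> C, B)\<close> has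
  \<open>p + s\<close> edges, so \<open>4(p + s) = 2|E| + y\<close> with \<open>y = 2p - a - b\<close>; as \<open>MaxCut \<le> |E|\<close>, it
  suffices to show \<open>4|E| \<le> 3\<Delta>y\<close>. Summing conditions (1) and (2) gives \<open>y \<ge> |A| + |B|\<close> and
  \<open>y \<ge> 2s\<close>, and summing degrees over \<open>A \<union> B\<close> gives \<open>2|E| - 2s \<le> \<Delta>(|A| + |B|) \<le> \<Delta>y\<close>.
  If \<open>\<Delta> \<ge> 2\<close>, then also \<open>4s \<le> \<Delta>y\<close> and the two bounds add up to \<open>4|E| \<le> 3\<Delta>y\<close>; if
  \<open>\<Delta> = 1\<close>, no vertex of \<open>C\<close> has a neighbour, so \<open>s = 0\<close>.\<close>

definition deg_sum :: "'a set set \<Rightarrow> 'a set \<Rightarrow> 'a set \<Rightarrow> nat" where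
  "deg_sum E X Y = (\<Sum>u\<in>X. deg_in E Y u)"

lemma simple_graph_finite_edges: "simple_graph V E \<Longrightarrow> finite E"
  unfolding simple_graph_def by (meson PowI finite_Pow_iff finite_subset subsetI)

lemma simple_graph_edgeD: "simple_graph V E \<Longrightarrow> {u, v} \<in> E \<Longrightarrow> u \<noteq> v \<and> u \<in> V \<and> v \<in> V"
  unfolding simple_graph_def by (cases "u = v") auto

lemma deg_in_eq_card_edges: "deg_in E Y u = card {e \<in> E. \<exists>v\<in>Y. e = {v, u}}"
proof -
  have "inj_on (\<lambda>v. {v, u}) {v \<in> Y. {v, u} \<in> E}"
    by (rule inj_onI) (simp add: doubleton_eq_iff, blast)
  moreover have "(\<lambda>v. {v, u}) ` {v \<in> Y. {v, u} \<in> E} = {e \<in> E. \<exists>v\<in>Y. e = {v, u}}"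
    by blast
  ultimately show ?thesis
    unfolding deg_in_def by (simp flip: card_image)
qed

lemma deg_in_Un:
  assumes "finite Y\<^sub>1" "finite Y\<^sub>2" "Y\<^sub>1 \<inter> Y\<^sub>2 = {}"
  shows "deg_in E (Y\<^sub>1 \<union> Y\<^sub>2) u = deg_in E Y\<^sub>1 u + deg_in E Y\<^sub>2 u"
proof -
  have "{v \<in> Y\<^sub>1 \<union> Y\<^sub>2. {v, u} \<in> E} = {v \<in> Y\<^sub>1. {v, u} \<in> E} \<union> {v \<in> Y\<^sub>2. {v, u} \<in> E}"
    by blast
  then show ?thesis
    unfolding deg_in_def using assms by (simp only:) (rule card_Un_disjoint; auto)
qed

lemma deg_sum_Un_left:
  "finite X\<^sub>1 \<Longrightarrow> finite X\<^sub>2 \<Longrightarrow> X\<^sub>1 \<inter> X\<^sub>2 = {} \<Longrightarrow>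
    deg_sum E (X\<^sub>1 \<union> X\<^sub>2) Y = deg_sum E X\<^sub>1 Y + deg_sum E X\<^sub>2 Y"
  unfolding deg_sum_def by (simp add: sum.union_disjoint)

lemma deg_sum_commute: "finite X \<Longrightarrow> finite Y \<Longrightarrow> deg_sum E X Y = deg_sum E Y X"
  unfolding deg_sum_def deg_in_def
  by (rule sum_multicount_gen) (simp_all add: insert_commute)

lemma deg_sum_eq_sum_edges:
  assumes "finite X" "finite E"
  shows "deg_sum E X Y = (\<Sum>e\<in>E. card {u \<in> X. \<exists>v\<in>Y. e = {v, u}})"
  unfolding deg_sum_def deg_in_eq_card_edges
  by (rule sum_multicount_gen[OF assms]) simp

lemma deg_sum_vertices:
  assumes simple: "simple_graph V E"
  shows "deg_sum E V V = 2 * card E"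
proof -
  have edge_endpoints: "{u \<in> V. \<exists>v\<in>V. e = {v, u}} = e" if "e \<in> E" for e
  proof -
    obtain x y where "e = {x, y}" "x \<noteq> y"
      using simple \<open>e \<in> E\<close> unfolding simple_graph_def by (meson card_2_iff)
    then show ?thesis
      using simple_graph_edgeD[OF simple] \<open>e \<in> E\<close> by auto
  qed
  have "finite V" "finite E"
    using simple simple_graph_finite_edges unfolding simple_graph_def by auto
  then have "deg_sum E V V = (\<Sum>e\<in>E. card {u \<in> V. \<exists>v\<in>V. e = {v, u}})"
    by (rule deg_sum_eq_sum_edges)
  also have "\<dots> = (\<Sum>e\<in>E. 2)"
    using simple edge_endpoints unfolding simple_graph_def by (intro sum.cong) auto
  finally show ?thesis
    by simp
qed

lemma deg_sum_disjoint:
  assumes "simple_graph V E" "finite X" "X \<inter> Y = {}"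
  shows "deg_sum E X Y = num_edges E X Y"
proof -
  have "card {u \<in> X. \<exists>v\<in>Y. e = {v, u}} = (if \<exists>x\<in>X. \<exists>y\<in>Y. e = {x, y} then 1 else 0)" for e
  proof (cases "\<exists>x\<in>X. \<exists>y\<in>Y. e = {x, y}")
    case True
    then obtain x y where "x \<in> X" "y \<in> Y" "e = {x, y}"
      by blast
    then have "{u \<in> X. \<exists>v\<in>Y. e = {v, u}} = {x}"
      using assms(3) by (auto simp: doubleton_eq_iff)
    then show ?thesis
      using True by simp
  next
    case False
    then have "{u \<in> X. \<exists>v\<in>Y. e = {v, u}} = {}"
      by (auto simp: insert_commute)
    then have "card {u \<in> X. \<exists>v\<in>Y. e = {v, u}} = 0"
      by (metis card.empty)
    with False show ?thesis
      by simp
  qed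
  moreover have "finite E"
    using assms(1) by (rule simple_graph_finite_edges)
  ultimately show ?thesis
    using assms(2) by (simp add: deg_sum_eq_sum_edges num_edges_def sum.inter_filter[symmetric])
qed

lemma deg_sum_dominated_bounds:
  assumes "\<forall>v\<in>X. deg_in E Y v \<ge> deg_in E X v + max 1 (deg_in E Z v)"
  shows "deg_sum E X X + deg_sum E X Z \<le> deg_sum E X Y"
    and "deg_sum E X X + card X \<le> deg_sum E X Y"
proof -
  have "(\<Sum>v\<in>X. deg_in E X v + deg_in E Z v) \<le> (\<Sum>v\<in>X. deg_in E Y v)"
    and "(\<Sum>v\<in>X. deg_in E X v + 1) \<le> (\<Sum>v\<in>X. deg_in E Y v)"
    using assms by (auto intro!: sum_mono)
  then show "deg_sum E X X + deg_sum E X Z \<le> deg_sum E X Y"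
    and "deg_sum E X X + card X \<le> deg_sum E X Y"
    unfolding deg_sum_def by (simp_all add: sum.distrib sum_Suc)
qed

lemma deg_in_le_max_degree: "simple_graph V E \<Longrightarrow> v \<in> V \<Longrightarrow> deg_in E V v \<le> max_degree V E"
  unfolding max_degree_def simple_graph_def by simp

lemma deg_sum_le_max_degree:
  assumes "simple_graph V E" "X \<subseteq> V"
  shows "deg_sum E X V \<le> max_degree V E * card X"
proof -
  have "deg_sum E X V \<le> (\<Sum>v\<in>X. max_degree V E)"
    unfolding deg_sum_def using assms by (intro sum_mono deg_in_le_max_degree) auto
  then show ?thesis
    by (simp add: mult.commute)
qed

lemma max_cut_le_card_edges:
  assumes "simple_graph V E"
  shows "max_cut V E \<le> card E"
proof -
  have "finite V" "finite E"
    using assms simple_graph_finite_edges unfolding simple_graph_def by auto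
  then show ?thesis
    unfolding max_cut_def num_edges_def by (intro Max.boundedI) (auto intro: card_mono)
qed

locale vertex_partition =
  fixes V :: "'a set" and E :: "'a set set" and A B C :: "'a set"
  assumes simple: "simple_graph V E"
    and cover: "A \<union> B \<union> C = V"
    and disjoint: "A \<inter> B = {}" "A \<inter> C = {}" "B \<inter> C = {}"
begin

lemma finite_parts: "finite A" "finite B" "finite C"
proof -
  have "finite (A \<union> B \<union> C)"
    using simple cover unfolding simple_graph_def by simp
  then show "finite A" "finite B" "finite C"
    by simp_all
qed

lemma deg_in_vertices: "deg_in E V v = deg_in E A v + deg_in E B v + deg_in E C v"
proof -
  have "deg_in E (A \<union> B \<union> C) v = deg_in E A v + deg_in E B v + deg_in E C v"
    using finite_parts disjoint by (simp add: deg_in_Un Int_Un_distrib2)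
  then show ?thesis
    unfolding cover .
qed

lemma deg_sum_vertices_right:
  "deg_sum E X V = deg_sum E X A + deg_sum E X B + deg_sum E X C"
  unfolding deg_sum_def deg_in_vertices by (simp add: sum.distrib)

lemma double_card_edges:
  "2 * card E = deg_sum E A A + deg_sum E B B + deg_sum E C C
    + 2 * deg_sum E A B + 2 * deg_sum E A C + 2 * deg_sum E B C"
proof -
  have "2 * card E = deg_sum E (A \<union> B \<union> C) V"
    using deg_sum_vertices[OF simple] cover by simp
  also have "\<dots> = deg_sum E A V + deg_sum E B V + deg_sum E C V"
    using finite_parts disjoint by (simp add: deg_sum_Un_left Int_Un_distrib2)
  also have "\<dots> = deg_sum E A A + deg_sum E B B + deg_sum E C C
    + 2 * deg_sum E A B + 2 * deg_sum E A C + 2 * deg_sum E B C"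
    using finite_parts deg_sum_commute[of B A] deg_sum_commute[of C A] deg_sum_commute[of C B]
    by (simp add: deg_sum_vertices_right)
  finally show ?thesis .
qed

lemma num_edges_cut: "num_edges E (A \<union> C) B = deg_sum E A B + deg_sum E C B"
proof -
  have "num_edges E (A \<union> C) B = deg_sum E (A \<union> C) B"
    using simple finite_parts disjoint by (subst deg_sum_disjoint) auto
  then show ?thesis
    using finite_parts disjoint by (simp add: deg_sum_Un_left)
qed

end

locale balanced_partition = vertex_partition +
  assumes A_balanced: "\<forall>v\<in>A. deg_in E B v \<ge> deg_in E A v + max 1 (deg_in E C v)"
    and B_balanced: "\<forall>v\<in>B. deg_in E A v \<ge> deg_in E B v + max 1 (deg_in E C v)"
    and C_independent: "\<forall>v\<in>C. deg_in E C v = 0"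
    and C_even: "\<forall>v\<in>C. deg_in E A v = deg_in E B v"
begin

lemma deg_sum_C_B: "deg_sum E C B = deg_sum E A C"
proof -
  have "deg_sum E C B = deg_sum E C A"
    unfolding deg_sum_def using C_even by simp
  then show ?thesis
    using finite_parts deg_sum_commute[of C A] by simp
qed

lemma deg_sum_C_C: "deg_sum E C C = 0"
  unfolding deg_sum_def using C_independent by simp

lemma double_card_edges_balanced:
  "2 * card E = deg_sum E A A + deg_sum E B B + 2 * deg_sum E A B + 4 * deg_sum E A C"
  using double_card_edges deg_sum_C_C deg_sum_C_B finite_parts deg_sum_commute[of B C]
  by simp

lemma A_bounds:
  "deg_sum E A A + deg_sum E A C \<le> deg_sum E A B"
  "deg_sum E A A + card A \<le> deg_sum E A B"
  using deg_sum_dominated_bounds[OF A_balanced] by simp_all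

lemma B_bounds:
  "deg_sum E B B + deg_sum E A C \<le> deg_sum E A B"
  "deg_sum E B B + card B \<le> deg_sum E A B"
  using deg_sum_dominated_bounds[OF B_balanced] finite_parts deg_sum_C_B
    deg_sum_commute[of A B] deg_sum_commute[of B C]
  by simp_all

lemma degree_bound:
  "deg_sum E A A + deg_sum E B B + 2 * deg_sum E A B + 2 * deg_sum E A C
    \<le> max_degree V E * (card A + card B)"
proof -
  have "deg_sum E (A \<union> B) V \<le> max_degree V E * card (A \<union> B)"
    using simple cover by (intro deg_sum_le_max_degree) auto
  then show ?thesis
    using finite_parts disjoint deg_sum_C_B
    by (simp add: deg_sum_Un_left deg_sum_vertices_right card_Un_disjoint
        deg_sum_commute[of B A] deg_sum_commute[of B C])
qed

lemma no_C_edges_if_max_degree_one: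
  assumes "max_degree V E = 1"
  shows "deg_sum E A C = 0"
proof -
  have "deg_in E A v = 0" if "v \<in> C" for v
    using deg_in_le_max_degree[OF simple, of v] deg_in_vertices C_even that cover assms by auto
  then have "deg_sum E C A = 0"
    unfolding deg_sum_def by simp
  then show ?thesis
    using finite_parts deg_sum_commute[of C A] by simp
qed

lemma card_edges_bound:
  "4 * card E \<le> 3 * max_degree V E * (2 * deg_sum E A B - deg_sum E A A - deg_sum E B B)"
proof -
  define \<Delta> s y where "\<Delta> = max_degree V E" and "s = deg_sum E A C"
    and "y = 2 * deg_sum E A B - deg_sum E A A - deg_sum E B B"
  have y_ge: "card A + card B \<le> y" "2 * s \<le> y"
    using A_bounds B_bounds unfolding y_def s_def by auto
  have "2 * card E \<le> \<Delta> * (card A + card B) + 2 * s"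
    using degree_bound double_card_edges_balanced unfolding \<Delta>_def s_def by linarith
  also have "\<dots> \<le> \<Delta> * y + 2 * s"
    using y_ge by simp
  finally have edges: "2 * card E \<le> \<Delta> * y + 2 * s" .
  consider "\<Delta> = 0" | "\<Delta> = 1" | "\<Delta> \<ge> 2"
    by linarith
  then have "4 * card E \<le> 3 * \<Delta> * y"
  proof cases
    case 1
    then show ?thesis
      using edges double_card_edges_balanced unfolding s_def by simp
  next
    case 2
    then show ?thesis
      using edges no_C_edges_if_max_degree_one unfolding \<Delta>_def s_def by simp
  next
    case 3
    then have "4 * s \<le> \<Delta> * y"
      using y_ge mult_le_mono[of 2 \<Delta> "2 * s" y] by linarith
    then show ?thesis
      using edges by simp
  qed
  then show ?thesis
    unfolding \<Delta>_def y_def .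
qed

theorem cut_ge_max_cut:
  "real (num_edges E (A \<union> C) B) \<ge> (1/2 + 1 / (3 * real (max_degree V E))) * real (max_cut V E)"
proof -
  define \<Delta> m y where "\<Delta> = max_degree V E" and "m = card E"
    and "y = 2 * deg_sum E A B - deg_sum E A A - deg_sum E B B"
  have "4 * num_edges E (A \<union> C) B = 2 * m + y"
    using num_edges_cut deg_sum_C_B double_card_edges_balanced A_bounds B_bounds
    unfolding m_def y_def by linarith
  then have "4 * real (num_edges E (A \<union> C) B) = 2 * real m + real y"
    by (metis of_nat_add of_nat_mult of_nat_numeral)
  then have cut: "real (num_edges E (A \<union> C) B) = real m / 2 + real y / 4"
    by linarith
  have "4 * real m \<le> 3 * real \<Delta> * real y"
    using of_nat_mono[OF card_edges_bound] unfolding \<Delta>_def m_def y_def by simp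
  then have slack: "real m / (3 * real \<Delta>) \<le> real y / 4"
    by (cases "\<Delta> = 0") (simp_all add: field_simps)
  have "(1/2 + 1 / (3 * real \<Delta>)) * real (max_cut V E) \<le> (1/2 + 1 / (3 * real \<Delta>)) * real m"
    using max_cut_le_card_edges[OF simple] unfolding m_def by (intro mult_left_mono) auto
  also have "\<dots> = real m / 2 + real m / (3 * real \<Delta>)"
    by (simp add: field_simps)
  also have "\<dots> \<le> real (num_edges E (A \<union> C) B)"
    using slack cut by simp
  finally show ?thesis
    unfolding \<Delta>_def .
qed

end

theorem corollary4:
  fixes V :: "'a set" and E :: "'a set set" and A B C :: "'a set"
  assumes "simple_graph V E"
    and "connected_graph V E"
    and "A \<union> B \<union> C = V"
    and "A \<inter> B = {}" and "A \<inter> C = {}" and "B \<inter> C = {}"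
    and "\<forall>v\<in>A. deg_in E B v \<ge> deg_in E A v + max 1 (deg_in E C v)"
    and "\<forall>v\<in>B. deg_in E A v \<ge> deg_in E B v + max 1 (deg_in E C v)"
    and "\<forall>v\<in>C. deg_in E C v = 0"
    and "\<forall>v\<in>C. deg_in E A v = deg_in E B v"
    and "num_edges E (A \<union> B) C + 2 * num_edges E A A + 2 * num_edges E B B
           \<le> 2 * num_edges E A B"
  shows "real (num_edges E (A \<union> C) B)
           \<ge> (1/2 + 1 / (3 * real (max_degree V E))) * real (max_cut V E)"
proof -
  interpret balanced_partition V E A B C
    using assms(1,3-10) by unfold_locales
  show ?thesis
    by (rule cut_ge_max_cut)
qed

end
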